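(* Let $k\ge 3$, let $\mathcal H$ be a Hilbert space over $\mathbb K\in\{\mathbb R,\mathbb C\}$, and let $\mathbf{x}_1,\ldots,\mathbf{x}_k\in\mathcal H$ be norm one vectors. Then $\pi_s(\mathbf{x}_1\vee\cdots\vee\mathbf{x}_k,\otimes^{k,s}\mathcal H)=1$ if and only if $\dim(\operatorname{span}\{\mathbf{x}_1,\ldots,\mathbf{x}_k\})=1$ in the complex case, and $\dim(\operatorname{span}\{\mathbf{x}_1,\ldots,\mathbf{x}_k\})\in\{1,2\}$ in the real case.
   Context: $\otimes^{k,s}\mathcal H$ denotes the $k$-fold symmetric tensor product of $\mathcal H$, $\mathbf{x}_1\vee\cdots\vee\mathbf{x}_k$ the symmetric tensor (symmetrization of $\mathbf{x}_1\otimes\cdots\otimes\mathbf{x}_k$), and $\pi_s$ the symmetric projective tensor norm. Its dual is the space of continuous $k$-homogeneous polynomials on $\mathcal H$, which on a Hilbert space is isometric to the space $\mathcal L_s(^k\mathcal H)$ of continuous symmetric $k$-linear forms, so that $\pi_s(\mathbf{x}_1\vee\cdots\vee\mathbf{x}_k,\otimes^{k,s}\mathcal H)=\max\{|T(\mathbf{x}_1,\ldots,\mathbf{x}_k)|: T\in\mathcal L_s(^k\mathcal H),\ \|T\|=1\}$, where $\|T\|=\sup\{|T(\mathbf{w}_1,\ldots,\mathbf{w}_k)|:\|\mathbf{w}_i\|\le 1\}$. *)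

theory Defs
  imports "HOL-Analysis.Analysis"
begin

text \<open>Complex Hilbert spaces (HOL-Analysis only provides real inner product spaces):
  a complete real normed space with a complex scalar multiplication extending the real one
  and a complex inner product (linear in the second argument) inducing the norm.\<close>

class complex_hilbert = real_normed_vector + complete_space +
  fixes scaleC :: "complex \<Rightarrow> 'a \<Rightarrow> 'a"
    and cinner :: "'a \<Rightarrow> 'a \<Rightarrow> complex"
  assumes scaleC_add_right: "scaleC a (x + y) = scaleC a x + scaleC a y"
    and scaleC_add_left: "scaleC (a + b) x = scaleC a x + scaleC b x"
    and scaleC_scaleC: "scaleC a (scaleC b x) = scaleC (a * b) x"
    and scaleC_one: "scaleC 1 x = x"
    and scaleR_scaleC: "scaleR r x = scaleC (of_real r) x"
    and cinner_conj_commute: "cinner x y = cnj (cinner y x)"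
    and cinner_add_right: "cinner x (y + z) = cinner x y + cinner x z"
    and cinner_scaleC_right: "cinner x (scaleC a y) = a * cinner x y"
    and cinner_ge_zero: "Im (cinner x x) = 0 \<and> Re (cinner x x) \<ge> 0"
    and cinner_eq_zero_iff: "cinner x x = 0 \<longleftrightarrow> x = 0"
    and norm_eq_sqrt_cinner: "norm x = sqrt (Re (cinner x x))"

text \<open>k-linear forms on a vector space with scalar multiplication sc, represented as
  functions of the argument tuple (w 0, ..., w (k-1)).\<close>

definition multilinear_form ::
  "('f::field \<Rightarrow> 'a::ab_group_add \<Rightarrow> 'a) \<Rightarrow> nat \<Rightarrow> ((nat \<Rightarrow> 'a) \<Rightarrow> 'f) \<Rightarrow> bool" where
  "multilinear_form sc k T \<longleftrightarrow>
     (\<forall>w w'. (\<forall>i<k. w i = w' i) \<longrightarrow> T w = T w') \<and>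
     (\<forall>i<k. \<forall>w u v a b. T (w(i := sc a u + sc b v)) = a * T (w(i := u)) + b * T (w(i := v)))"

definition symmetric_form :: "nat \<Rightarrow> ((nat \<Rightarrow> 'a) \<Rightarrow> 'f) \<Rightarrow> bool" where
  "symmetric_form k T \<longleftrightarrow> (\<forall>p w. p permutes {..<k} \<longrightarrow> T (w \<circ> p) = T w)"

definition form_norm :: "nat \<Rightarrow> ((nat \<Rightarrow> 'a::real_normed_vector) \<Rightarrow> 'f::real_normed_field) \<Rightarrow> real" where
  "form_norm k T = Sup {norm (T w) | w. \<forall>i<k. norm (w i) \<le> 1}"

definition bounded_form :: "nat \<Rightarrow> ((nat \<Rightarrow> 'a::real_normed_vector) \<Rightarrow> 'f::real_normed_field) \<Rightarrow> bool" where
  "bounded_form k T \<longleftrightarrow> bdd_above {norm (T w) | w. \<forall>i<k. norm (w i) \<le> 1}"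

text \<open>Symmetric projective tensor norm of x_1 v ... v x_k (arguments x 0, ..., x (k-1)),
  computed by duality with continuous symmetric k-linear forms of norm one.\<close>

definition pi_s ::
  "('f::real_normed_field \<Rightarrow> 'a::real_normed_vector \<Rightarrow> 'a) \<Rightarrow> nat \<Rightarrow> (nat \<Rightarrow> 'a) \<Rightarrow> real" where
  "pi_s sc k x = Sup {norm (T x) | T. multilinear_form sc k T \<and> symmetric_form k T \<and>
                       bounded_form k T \<and> form_norm k T = 1}"

end

(*
  If pi_s(x) = 1, the supremum defining pi_s is attained: the symmetric k-linear forms bounded by
  the product of the norms form a compact set in the product topology, so one of them satisfies
  T(x) = 1. Freezing all but three arguments of T at the x_m yields a symmetric trilinear form S of
  norm at most one with S(y1, y2, y3) = 1 for unit vectors y1, y2, y3. A functional of norm c that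
  takes the value c at a unit vector y is c <y, .>; applied to S(y1, y2, .) and to the
  polarizations S(y1 +- y2, y1 +- y2, .) (over C also S(y1 +- i y2, y1 +- i y2, .)) this expresses
  S(y1, y1, .) through inner products. Over R, comparing the triples (y1, y2, y3) and (y1, z, z),
  z the normalized y2 + y3, puts y1 into span {y2, y3}, so no three of the x_m are independent.
  Over C one gets S(y1, y1, .) = conj <y1, y2> <y3, .>, and comparing permuted triples forces any
  two of the x_m to be collinear.
  Conversely, if the x_m lie on a complex line C b, the form prod_m <b, w_m> attains 1 at x; if
  they lie in a real plane with orthonormal basis e1, e2, identify the plane with C through
  w -> <e1, w> + i <e2, w> and take the real part of a suitably rotated product of these
  coordinates.
*)

theory Submission
  imports Defs
begin

interpretation cvs: vector_space "scaleC :: complex \<Rightarrow> 'a::complex_hilbert \<Rightarrow> 'a"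
  by unfold_locales (simp_all add: scaleC_add_right scaleC_add_left scaleC_scaleC scaleC_one)

lemma scaleC_of_real: "scaleC (complex_of_real r) x = r *\<^sub>R (x::'a::complex_hilbert)"
  by (simp add: scaleR_scaleC)

lemma cinner_add_left: "cinner (x + y) (z::'a::complex_hilbert) = cinner x z + cinner y z"
  by (subst (1 2 3) cinner_conj_commute) (simp add: cinner_add_right)

lemma cinner_scaleC_left: "cinner (scaleC a x) (y::'a::complex_hilbert) = cnj a * cinner x y"
  by (subst (1 2) cinner_conj_commute) (simp add: cinner_scaleC_right)

lemma cinner_diff_right: "cinner x (y - z) = cinner x y - cinner x (z::'a::complex_hilbert)"
  using cinner_add_right[of x "y - z" z] by simp

lemma cinner_diff_left: "cinner (y - z) x = cinner y x - cinner z (x::'a::complex_hilbert)"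
  using cinner_add_left[of "y - z" z x] by simp

lemmas cinner_simps = cinner_add_left cinner_add_right cinner_diff_left cinner_diff_right
  cinner_scaleC_left cinner_scaleC_right

lemma cinner_self: "cinner x x = complex_of_real ((norm (x::'a::complex_hilbert))\<^sup>2)"
  using cinner_ge_zero[of x] norm_eq_sqrt_cinner[of x] by (simp add: complex_eq_iff)

lemma cinner_self_eq_1: "norm x = 1 \<Longrightarrow> cinner x (x::'a::complex_hilbert) = 1"
  by (simp add: cinner_self)

lemma power2_norm_eq_cinner: "(norm x)\<^sup>2 = Re (cinner x (x::'a::complex_hilbert))"
  using cinner_ge_zero[of x] norm_eq_sqrt_cinner[of x] by simp

lemma norm_scaleC: "norm (scaleC a (x::'a::complex_hilbert)) = cmod a * norm x"
proof -
  have "cinner (scaleC a x) (scaleC a x) = cnj a * a * cinner x x"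
    by (simp add: cinner_scaleC_left cinner_scaleC_right)
  then have "(norm (scaleC a x))\<^sup>2 = Re (cnj a * a * cinner x x)"
    by (simp only: power2_norm_eq_cinner)
  also have "\<dots> = (cmod a * norm x)\<^sup>2"
    by (simp only: cinner_self mult.commute[of "cnj a"] flip: complex_norm_square of_real_mult)
      (simp add: power_mult_distrib)
  finally show ?thesis
    by simp
qed

lemma cinner_ext: "(\<And>v. cinner u v = cinner w (v::'a::complex_hilbert)) \<Longrightarrow> u = w"
  using cinner_eq_zero_iff[of "u - w"] by (simp add: cinner_diff_left)

lemma norm_add_Pythagorean_cinner:
  fixes x y :: "'a::complex_hilbert"
  assumes "cinner x y = 0"
  shows "(norm (x + y))\<^sup>2 = (norm x)\<^sup>2 + (norm y)\<^sup>2"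
  using assms cinner_conj_commute[of y x] by (simp add: power2_norm_eq_cinner cinner_simps)

lemma cmod_cinner_le_norm:
  fixes b w :: "'a::complex_hilbert"
  assumes "norm b = 1"
  shows "cmod (cinner b w) \<le> norm w"
proof -
  define c where "c = cinner b w"
  have "cinner (w - scaleC c b) (w - scaleC c b) = cinner w w - cnj c * c"
    using assms cinner_conj_commute[of w b]
    by (simp add: cinner_simps cinner_self_eq_1 c_def)
  then have "complex_of_real ((norm (w - scaleC c b))\<^sup>2) = complex_of_real ((norm w)\<^sup>2 - (cmod c)\<^sup>2)"
    by (simp only: cinner_self of_real_diff complex_norm_square mult.commute)
  then have "(norm w)\<^sup>2 - (cmod c)\<^sup>2 \<ge> 0"
    by (metis of_real_eq_iff zero_le_power2)
  then show ?thesis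
    by (simp add: c_def abs_le_square_iff)
qed

section \<open>Functionals attaining their norm\<close>

lemma quadratic_perturbation_zero:
  fixes A B c :: real
  assumes "c > 0" "B \<ge> 0" "A \<ge> 0"
    and bound: "\<And>s. s > 0 \<Longrightarrow> c + s * A \<le> c * sqrt (1 + s\<^sup>2 * A * B)"
  shows "A = 0"
proof (rule ccontr)
  assume "A \<noteq> 0"
  define s where "s = 1 / (c * (B + 1))"
  have "s > 0"
    using assms by (simp add: s_def)
  have "c * s * B = B / (B + 1)"
    using assms by (simp add: s_def)
  then have "c * s * B < 1"
    using assms by simp
  have "(c + s * A)\<^sup>2 \<le> (c * sqrt (1 + s\<^sup>2 * A * B))\<^sup>2"
    using bound[OF \<open>s > 0\<close>] assms \<open>s > 0\<close> by (intro power_mono) auto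
  also have "\<dots> = c\<^sup>2 * (1 + s\<^sup>2 * A * B)"
    using assms by (simp add: power_mult_distrib)
  finally have "s * A * (2 * c + s * A) \<le> s * A * (c * (c * s * B))"
    by (simp add: power2_eq_square algebra_simps)
  then have "2 * c + s * A \<le> c * (c * s * B)"
    using assms \<open>s > 0\<close> \<open>A \<noteq> 0\<close> by (simp add: mult_le_cancel_left)
  moreover have "c * (c * s * B) < c"
    using assms \<open>c * s * B < 1\<close> by simp
  moreover have "s * A \<ge> 0"
    using assms \<open>s > 0\<close> by simp
  ultimately show False
    using assms by linarith
qed

lemma norming_functional_eq_inner:
  fixes f :: "'a::real_inner \<Rightarrow> real"
  assumes add: "\<And>u v. f (u + v) = f u + f v" and scale: "\<And>r u. f (r *\<^sub>R u) = r * f u"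
    and bound: "\<And>u. \<bar>f u\<bar> \<le> c * norm u" and y: "norm y = 1" and fy: "f y = c"
  shows "f u = c * inner y u"
proof -
  have yy: "inner y y = 1"
    using y by (simp add: dot_square_norm)
  \<comment> \<open>Moving y orthogonally to itself changes its norm only to second order,
    so f must vanish in such directions.\<close>
  have orth: "f v = 0" if yv: "inner y v = 0" for v
  proof (cases "c = 0")
    case True
    then show ?thesis using bound[of v] by simp
  next
    case False
    then have "c > 0" using bound[of y] y fy by simp
    have "(f v)\<^sup>2 = 0"
    proof (rule quadratic_perturbation_zero[OF \<open>c > 0\<close>, of "(norm v)\<^sup>2"])
      fix s :: real assume "s > 0"
      define t where "t = s * f v"
      have "(norm (y + t *\<^sub>R v))\<^sup>2 = 1 + s\<^sup>2 * (f v)\<^sup>2 * (norm v)\<^sup>2"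
        using norm_add_Pythagorean[of y "t *\<^sub>R v"] yv y
        by (simp add: orthogonal_def t_def power_mult_distrib)
      then have "norm (y + t *\<^sub>R v) = sqrt (1 + s\<^sup>2 * (f v)\<^sup>2 * (norm v)\<^sup>2)"
        by (metis norm_ge_zero real_sqrt_unique)
      moreover have "f (y + t *\<^sub>R v) = c + s * (f v)\<^sup>2"
        by (simp add: add scale fy t_def power2_eq_square)
      ultimately show "c + s * (f v)\<^sup>2 \<le> c * sqrt (1 + s\<^sup>2 * (f v)\<^sup>2 * (norm v)\<^sup>2)"
        using bound[of "y + t *\<^sub>R v"] by simp
    qed simp_all
    then show ?thesis by simp
  qed
  have "f (u - inner y u *\<^sub>R y) = 0"
    by (rule orth) (simp add: inner_diff_right yy)
  then show ?thesis
    using add[of "u - inner y u *\<^sub>R y" "inner y u *\<^sub>R y"] by (simp add: scale fy)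
qed

lemma norming_functional_eq_cinner:
  fixes f :: "'a::complex_hilbert \<Rightarrow> complex"
  assumes add: "\<And>u v. f (u + v) = f u + f v" and scale: "\<And>r u. f (scaleC r u) = r * f u"
    and bound: "\<And>u. cmod (f u) \<le> c * norm u" and y: "norm y = 1" and fy: "f y = complex_of_real c"
  shows "f u = complex_of_real c * cinner y u"
proof -
  have yy: "cinner y y = 1"
    using y by (rule cinner_self_eq_1)
  have orth: "f v = 0" if yv: "cinner y v = 0" for v
  proof (cases "c = 0")
    case True
    then show ?thesis using bound[of v] by simp
  next
    case False
    then have "c > 0" using bound[of y] y fy by simp
    have "(cmod (f v))\<^sup>2 = 0"
    proof (rule quadratic_perturbation_zero[OF \<open>c > 0\<close>, of "(norm v)\<^sup>2"])
      fix s :: real assume "s > 0"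
      define t where "t = complex_of_real s * cnj (f v)"
      have "(norm (y + scaleC t v))\<^sup>2 = 1 + (cmod t * norm v)\<^sup>2"
        using norm_add_Pythagorean_cinner[of y "scaleC t v"] yv y
        by (simp add: cinner_scaleC_right norm_scaleC)
      also have "\<dots> = 1 + s\<^sup>2 * (cmod (f v))\<^sup>2 * (norm v)\<^sup>2"
        using \<open>s > 0\<close> by (simp add: t_def norm_mult power_mult_distrib)
      finally have "norm (y + scaleC t v) = sqrt (1 + s\<^sup>2 * (cmod (f v))\<^sup>2 * (norm v)\<^sup>2)"
        by (metis norm_ge_zero real_sqrt_unique)
      moreover have "f (y + scaleC t v) = complex_of_real c + complex_of_real s * (f v * cnj (f v))"
        by (simp add: add scale fy t_def mult_ac)
      then have "cmod (f (y + scaleC t v)) = c + s * (cmod (f v))\<^sup>2"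
        using \<open>c > 0\<close> \<open>s > 0\<close>
        by (simp only: norm_of_real flip: complex_norm_square of_real_mult of_real_add) simp
      ultimately show "c + s * (cmod (f v))\<^sup>2 \<le> c * sqrt (1 + s\<^sup>2 * (cmod (f v))\<^sup>2 * (norm v)\<^sup>2)"
        using bound[of "y + scaleC t v"] by simp
    qed simp_all
    then show ?thesis by simp
  qed
  have "f (u - scaleC (cinner y u) y) = 0"
    by (rule orth) (simp add: cinner_simps yy)
  then show ?thesis
    using add[of "u - scaleC (cinner y u) y" "scaleC (cinner y u) y"] by (simp add: scale fy)
qed

lemma complex_diff_extremal:
  fixes u1 u2 :: complex
  assumes "u1 - u2 = complex_of_real (A1 + A2)" "cmod u1 \<le> A1" "cmod u2 \<le> A2"
  shows "u1 = complex_of_real A1" "u2 = - complex_of_real A2"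
proof -
  have "Re u1 \<le> A1" "- Re u2 \<le> A2"
    using assms(2,3) abs_Re_le_cmod[of u1] abs_Re_le_cmod[of u2] by linarith+
  moreover have "Re u1 - Re u2 = A1 + A2" "Im u1 = Im u2"
    using assms(1) by (auto simp: complex_eq_iff)
  ultimately have "Re u1 = A1" "Re u2 = - A2"
    by linarith+
  moreover have "(Re u1)\<^sup>2 + (Im u1)\<^sup>2 \<le> A1\<^sup>2"
    using assms(2) by (metis cmod_power2 norm_ge_zero power_mono)
  ultimately show "u1 = complex_of_real A1" "u2 = - complex_of_real A2"
    using \<open>Im u1 = Im u2\<close> by (auto simp: complex_eq_iff)
qed

section \<open>Norming triples of symmetric trilinear forms\<close>

definition norming_triple ::
  "('a::real_normed_vector \<Rightarrow> 'a \<Rightarrow> 'a \<Rightarrow> 'f::real_normed_field) \<Rightarrow> 'a \<Rightarrow> 'a \<Rightarrow> 'a \<Rightarrow> bool"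
  where "norming_triple S y1 y2 y3 \<longleftrightarrow>
    norm y1 = 1 \<and> norm y2 = 1 \<and> norm y3 = 1 \<and> S y1 y2 y3 = 1"

locale sym_trilinear =
  fixes sc :: "'f::real_normed_field \<Rightarrow> 'a::real_normed_vector \<Rightarrow> 'a"
    and S :: "'a \<Rightarrow> 'a \<Rightarrow> 'a \<Rightarrow> 'f"
  assumes add_right: "S a b (u + v) = S a b u + S a b v"
    and scale_right: "S a b (sc r u) = r * S a b u"
    and commute_left: "S a b c = S b a c"
    and commute_right: "S a b c = S a c b"
    and norm_le: "norm (S a b c) \<le> norm a * norm b * norm c"
begin

lemma add_left: "S (u + v) b c = S u b c + S v b c"
  by (metis add_right commute_left commute_right)

lemma add_middle: "S a (u + v) c = S a u c + S a v c"
  by (metis add_right commute_right)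

lemma scale_left: "S (sc r u) b c = r * S u b c"
  by (metis scale_right commute_left commute_right)

lemma scale_middle: "S a (sc r u) c = r * S a u c"
  by (metis scale_right commute_right)

lemma diff_left: "S (u - v) b c = S u b c - S v b c"
  using add_left[of "u - v" v b c] by simp

lemma diff_middle: "S a (u - v) c = S a u c - S a v c"
  using add_middle[of a "u - v" v c] by simp

abbreviation norming :: "'a \<Rightarrow> 'a \<Rightarrow> 'a \<Rightarrow> bool" where
  "norming \<equiv> norming_triple S"

lemma norming_swap_left: "norming y1 y2 y3 \<Longrightarrow> norming y2 y1 y3"
  by (auto simp: norming_triple_def commute_left)

lemma norming_swap_right: "norming y1 y2 y3 \<Longrightarrow> norming y1 y3 y2"
  by (auto simp: norming_triple_def commute_right)

lemma norming_rotate: "norming y1 y2 y3 \<Longrightarrow> norming y2 y3 y1"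
  using norming_swap_left norming_swap_right by blast

end

locale real_sym_trilinear = sym_trilinear "scaleR :: real \<Rightarrow> 'a::real_inner \<Rightarrow> 'a" S for S
begin

lemma norming_apply:
  assumes "norming y1 y2 y3"
  shows "S y1 y2 v = inner y3 v"
proof -
  have "S y1 y2 v = 1 * inner y3 v"
  proof (rule norming_functional_eq_inner)
    show "\<bar>S y1 y2 u\<bar> \<le> 1 * norm u" for u
      using assms norm_le[of y1 y2 u] by (simp add: norming_triple_def)
  qed (use assms in \<open>simp_all add: norming_triple_def add_right scale_right\<close>)
  then show ?thesis
    by simp
qed

lemma polarization_extremal:
  assumes y: "norm y = 1" and diff: "S a a y - S b b y = (norm a)\<^sup>2 + (norm b)\<^sup>2"
  shows "S a a v = (norm a)\<^sup>2 * inner y v" "S b b v = - (norm b)\<^sup>2 * inner y v"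
proof -
  have bound: "\<bar>S w w u\<bar> \<le> (norm w)\<^sup>2 * norm u" for w u
    using norm_le[of w w u] by (simp add: power2_eq_square)
  have "\<bar>S a a y\<bar> \<le> (norm a)\<^sup>2" "\<bar>S b b y\<bar> \<le> (norm b)\<^sup>2"
    using bound[of a y] bound[of b y] y by simp_all
  then have extremal: "S a a y = (norm a)\<^sup>2" "- S b b y = (norm b)\<^sup>2"
    using diff by linarith+
  show "S a a v = (norm a)\<^sup>2 * inner y v"
    by (rule norming_functional_eq_inner[where f = "S a a", OF _ _ _ y])
      (simp_all add: add_right scale_right bound extremal)
  have "- S b b v = (norm b)\<^sup>2 * inner y v"
    by (rule norming_functional_eq_inner[where f = "\<lambda>u. - S b b u", OF _ _ _ y])
      (simp_all add: add_right scale_right bound extremal)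
  then show "S b b v = - (norm b)\<^sup>2 * inner y v"
    by simp
qed

lemma norming_diag_add:
  assumes "norming y1 y2 y3"
  shows "S y1 y1 v + S y2 y2 v = 2 * inner y1 y2 * inner y3 v"
proof -
  have units: "norm y1 = 1" "norm y2 = 1" "norm y3 = 1" "S y1 y2 y3 = 1"
    using assms by (simp_all add: norming_triple_def)
  have expand: "S (y1 + y2) (y1 + y2) u = S y1 y1 u + 2 * S y1 y2 u + S y2 y2 u"
    "S (y1 - y2) (y1 - y2) u = S y1 y1 u - 2 * S y1 y2 u + S y2 y2 u" for u
    by (simp_all add: add_left add_middle diff_left diff_middle commute_left[of y2 y1])
  have norm_add: "(norm (y1 + y2))\<^sup>2 = 2 + 2 * inner y1 y2"
    and norm_diff: "(norm (y1 - y2))\<^sup>2 = 2 - 2 * inner y1 y2"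
    using units by (simp_all add: power2_norm_eq_inner inner_add inner_diff inner_commute[of y2 y1]
        norm_eq_1)
  have "S (y1 + y2) (y1 + y2) y3 - S (y1 - y2) (y1 - y2) y3 =
      (norm (y1 + y2))\<^sup>2 + (norm (y1 - y2))\<^sup>2"
    using expand[of y3] units norm_add norm_diff by simp
  from polarization_extremal[OF units(3) this]
  have "S (y1 + y2) (y1 + y2) v = (2 + 2 * inner y1 y2) * inner y3 v"
    "S (y1 - y2) (y1 - y2) v = - (2 - 2 * inner y1 y2) * inner y3 v"
    by (simp_all only: norm_add norm_diff)
  then show ?thesis
    using expand[of v] by (simp add: algebra_simps)
qed

lemma norming_diag:
  assumes "norming y1 y2 y3"
  shows "S y1 y1 v = inner y1 y2 * inner y3 v + inner y1 y3 * inner y2 v - inner y2 y3 * inner y1 v"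
  using norming_diag_add[OF assms, of v]
    norming_diag_add[OF norming_swap_right[OF assms], of v]
    norming_diag_add[OF norming_swap_right[OF norming_swap_left[OF assms]], of v]
  by (simp add: inner_commute[of y3 y2])

lemma norming_span:
  assumes norming: "norming y1 y2 y3" and "y3 \<noteq> y2" "y3 \<noteq> - y2"
  shows "y1 \<in> span {y2, y3}"
proof -
  have units: "norm y1 = 1" "norm y2 = 1" "norm y3 = 1"
    using norming by (simp_all add: norming_triple_def)
  define z where "z = (1 / norm (y2 + y3)) *\<^sub>R (y2 + y3)"
  have "y2 + y3 \<noteq> 0"
    using \<open>y3 \<noteq> - y2\<close> by (simp add: add_eq_0_iff)
  then have "norm z = 1"
    by (simp add: z_def)
  then have "inner z z = 1"
    by (simp only: norm_eq_1)
  have "S y1 z v = inner z v" for v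
    using norming_apply[OF norming, of v] norming_apply[OF norming_swap_right[OF norming], of v]
    by (simp add: z_def scale_middle add_middle inner_add_left add.commute)
  then have "norming y1 z z"
    using units \<open>inner z z = 1\<close> by (simp add: norming_triple_def norm_eq_1)
  \<comment> \<open>Compare the values of S y1 y1 given by the norming triples (y1, y2, y3) and (y1, z, z).\<close>
  have "inner ((1 - inner y2 y3) *\<^sub>R y1) v =
      inner ((2 * inner y1 z) *\<^sub>R z - inner y1 y2 *\<^sub>R y3 - inner y1 y3 *\<^sub>R y2) v" for v
    using norming_diag[OF norming, of v] norming_diag[OF \<open>norming y1 z z\<close>, of v] \<open>inner z z = 1\<close>
    by (simp add: inner_diff_left algebra_simps)
  then have "(1 - inner y2 y3) *\<^sub>R y1 =
      (2 * inner y1 z) *\<^sub>R z - inner y1 y2 *\<^sub>R y3 - inner y1 y3 *\<^sub>R y2"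
    using vector_eq_rdot by blast
  also have "\<dots> \<in> span {y2, y3}"
    unfolding z_def by (intro span_diff span_mul span_add span_base) auto
  finally have "(1 - inner y2 y3) *\<^sub>R y1 \<in> span {y2, y3}" .
  moreover have "inner y2 y3 \<noteq> 1"
    using units \<open>y3 \<noteq> y2\<close> norm_cauchy_schwarz_eq[of y2 y3] by auto
  ultimately show ?thesis
    using span_mul[of "(1 - inner y2 y3) *\<^sub>R y1" _ "1 / (1 - inner y2 y3)"] by simp
qed

end

locale complex_sym_trilinear = sym_trilinear "scaleC :: complex \<Rightarrow> 'a::complex_hilbert \<Rightarrow> 'a" S
  for S
begin

lemma polarization_extremal:
  assumes y: "norm y = 1" and "cmod \<omega> = 1"
    and diff: "\<omega> * (S a a y - S b b y) = complex_of_real ((norm a)\<^sup>2 + (norm b)\<^sup>2)"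
  shows "\<omega> * S a a v = complex_of_real ((norm a)\<^sup>2) * cinner y v"
    and "\<omega> * S b b v = - complex_of_real ((norm b)\<^sup>2) * cinner y v"
proof -
  have bound: "cmod (\<mu> * S w w u) \<le> (norm w)\<^sup>2 * norm u" if "cmod \<mu> = 1" for \<mu> w u
    using norm_le[of w w u] that by (simp add: norm_mult power2_eq_square)
  have functional: "\<mu> * S w w v = complex_of_real ((norm w)\<^sup>2) * cinner y v"
    if "cmod \<mu> = 1" "\<mu> * S w w y = complex_of_real ((norm w)\<^sup>2)" for \<mu> w
    by (rule norming_functional_eq_cinner[where f = "\<lambda>u. \<mu> * S w w u", OF _ _ bound y])
      (use that in \<open>simp_all add: add_right scale_right algebra_simps\<close>)
  have "\<omega> * S a a y - \<omega> * S b b y = complex_of_real ((norm a)\<^sup>2 + (norm b)\<^sup>2)"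
    using diff by (simp add: right_diff_distrib)
  from complex_diff_extremal[OF this] bound[of \<omega> a y] bound[of \<omega> b y] y \<open>cmod \<omega> = 1\<close>
  have "\<omega> * S a a y = complex_of_real ((norm a)\<^sup>2)" "- \<omega> * S b b y = complex_of_real ((norm b)\<^sup>2)"
    by simp_all
  from functional[OF _ this(1)] functional[OF _ this(2)] \<open>cmod \<omega> = 1\<close>
  show "\<omega> * S a a v = complex_of_real ((norm a)\<^sup>2) * cinner y v"
    "\<omega> * S b b v = - complex_of_real ((norm b)\<^sup>2) * cinner y v"
    by (simp_all add: minus_equation_iff[of "\<omega> * S b b v"])
qed

lemma norming_diag_add:
  assumes "norming y1 y2 y3"
  shows "S y1 y1 v + S y2 y2 v = complex_of_real (2 * Re (cinner y1 y2)) * cinner y3 v"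
proof -
  have units: "norm y1 = 1" "norm y2 = 1" "norm y3 = 1" "S y1 y2 y3 = 1"
    using assms by (simp_all add: norming_triple_def)
  have expand: "S (y1 + y2) (y1 + y2) u = S y1 y1 u + 2 * S y1 y2 u + S y2 y2 u"
    "S (y1 - y2) (y1 - y2) u = S y1 y1 u - 2 * S y1 y2 u + S y2 y2 u" for u
    by (simp_all add: add_left add_middle diff_left diff_middle commute_left[of y2 y1])
  have norm_add: "(norm (y1 + y2))\<^sup>2 = 2 + 2 * Re (cinner y1 y2)"
    and norm_diff: "(norm (y1 - y2))\<^sup>2 = 2 - 2 * Re (cinner y1 y2)"
    using units by (simp_all add: power2_norm_eq_cinner cinner_simps cinner_self_eq_1
        cinner_conj_commute[of y2 y1])
  have "1 * (S (y1 + y2) (y1 + y2) y3 - S (y1 - y2) (y1 - y2) y3) =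
      complex_of_real ((norm (y1 + y2))\<^sup>2 + (norm (y1 - y2))\<^sup>2)"
    using expand[of y3] units norm_add norm_diff by simp
  from polarization_extremal[OF units(3) _ this]
  have "S (y1 + y2) (y1 + y2) v = complex_of_real (2 + 2 * Re (cinner y1 y2)) * cinner y3 v"
    "S (y1 - y2) (y1 - y2) v = - complex_of_real (2 - 2 * Re (cinner y1 y2)) * cinner y3 v"
    by (simp_all only: norm_add norm_diff norm_one mult_1)
  then have "S (y1 + y2) (y1 + y2) v + S (y1 - y2) (y1 - y2) v =
      2 * (complex_of_real (2 * Re (cinner y1 y2)) * cinner y3 v)"
    by (simp add: algebra_simps)
  moreover have "2 * (S y1 y1 v + S y2 y2 v) = S (y1 + y2) (y1 + y2) v + S (y1 - y2) (y1 - y2) v"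
    by (simp add: expand algebra_simps)
  ultimately show ?thesis
    by (metis mult_cancel_left zero_neq_numeral)
qed

lemma norming_diag_diff:
  assumes "norming y1 y2 y3"
  shows "S y1 y1 v - S y2 y2 v = - complex_of_real (2 * Im (cinner y1 y2)) * \<i> * cinner y3 v"
proof -
  have units: "norm y1 = 1" "norm y2 = 1" "norm y3 = 1" "S y1 y2 y3 = 1"
    using assms by (simp_all add: norming_triple_def)
  define p q where "p = y1 + scaleC \<i> y2" and "q = y1 - scaleC \<i> y2"
  have expand: "S p p u = S y1 y1 u + 2 * \<i> * S y1 y2 u - S y2 y2 u"
    "S q q u = S y1 y1 u - 2 * \<i> * S y1 y2 u - S y2 y2 u" for u
    by (simp_all add: p_def q_def add_left add_middle diff_left diff_middle scale_left scale_middle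
        commute_left[of y2 y1] algebra_simps)
  have norm_p: "(norm p)\<^sup>2 = 2 - 2 * Im (cinner y1 y2)"
    and norm_q: "(norm q)\<^sup>2 = 2 + 2 * Im (cinner y1 y2)"
    using units by (simp_all add: p_def q_def power2_norm_eq_cinner cinner_simps cinner_self_eq_1
        cinner_conj_commute[of y2 y1])
  have "S p p y3 - S q q y3 = 4 * \<i>"
    using expand[of y3] units by simp
  then have "- \<i> * (S p p y3 - S q q y3) = complex_of_real ((norm p)\<^sup>2 + (norm q)\<^sup>2)"
    using norm_p norm_q by (simp add: algebra_simps)
  from polarization_extremal[OF units(3) _ this]
  have "- \<i> * S p p v = complex_of_real (2 - 2 * Im (cinner y1 y2)) * cinner y3 v"
    "- \<i> * S q q v = - complex_of_real (2 + 2 * Im (cinner y1 y2)) * cinner y3 v"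
    by (simp_all only: norm_p norm_q) simp_all
  then have "\<i> * (- \<i> * S p p v) + \<i> * (- \<i> * S q q v) =
      2 * (- complex_of_real (2 * Im (cinner y1 y2)) * \<i> * cinner y3 v)"
    by (simp only:) (simp add: algebra_simps)
  moreover have "2 * (S y1 y1 v - S y2 y2 v) = \<i> * (- \<i> * S p p v) + \<i> * (- \<i> * S q q v)"
    by (simp add: expand algebra_simps)
  ultimately show ?thesis
    by (metis mult_cancel_left zero_neq_numeral)
qed

lemma norming_diag:
  assumes "norming y1 y2 y3"
  shows "S y1 y1 v = cnj (cinner y1 y2) * cinner y3 v"
  using norming_diag_add[OF assms, of v] norming_diag_diff[OF assms, of v]
  by (simp add: complex_eq_iff algebra_simps)

lemma norming_not_orthogonal:
  assumes norming: "norming y1 y2 y3"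
  shows "cinner y1 y2 \<noteq> 0"
proof
  assume "cinner y1 y2 = 0"
  have units: "norm y1 = 1" "norm y2 = 1" "norm y3 = 1" "S y1 y2 y3 = 1"
    using norming by (simp_all add: norming_triple_def)
  have "cinner y2 y1 = 0"
    using \<open>cinner y1 y2 = 0\<close> cinner_conj_commute[of y2 y1] by simp
  have diag1: "S y1 y1 v = 0" and diag2: "S y2 y2 v = 0" for v
    using norming_diag[OF norming, of v] norming_diag[OF norming_swap_left[OF norming], of v]
      \<open>cinner y1 y2 = 0\<close> \<open>cinner y2 y1 = 0\<close> by simp_all
  have "cinner y1 y3 = 0" "cinner y2 y3 = 0"
    using norming_diag[OF norming_swap_right[OF norming], of y2]
      norming_diag[OF norming_rotate[OF norming], of y1] diag1 diag2 units
    by (simp_all add: cinner_self_eq_1)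
  \<comment> \<open>Now y1, y2, y3 are orthonormal, and u is a unit vector with S u u y3 = 1 orthogonal to y3,
    contradicting norming_diag for the norming triple (u, y3, u).\<close>
  define u where "u = scaleC (complex_of_real (1 / sqrt 2)) (y1 + y2)"
  have "cinner (y1 + y2) (y1 + y2) = 2"
    using units \<open>cinner y1 y2 = 0\<close> \<open>cinner y2 y1 = 0\<close> by (simp add: cinner_simps cinner_self_eq_1)
  then have "norm (y1 + y2) = sqrt 2"
    by (simp add: norm_eq_sqrt_cinner)
  then have "norm u = 1"
    by (simp add: u_def norm_scaleC norm_divide)
  have "S u u y3 = 1"
    using units diag1 diag2 by (simp add: u_def scale_left scale_middle add_left add_middle
        commute_left[of y2 y1] flip: of_real_mult)
  then have "norming u y3 u"
    using \<open>norm u = 1\<close> units by (simp add: norming_triple_def commute_right[of u u])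
  moreover have "cinner u y3 = 0"
    using \<open>cinner y1 y3 = 0\<close> \<open>cinner y2 y3 = 0\<close> by (simp add: u_def cinner_simps)
  ultimately have "S u u y3 = 0"
    using norming_diag[of u y3 u y3] by simp
  with \<open>S u u y3 = 1\<close> show False
    by simp
qed

lemma norming_collinear:
  assumes norming: "norming y1 y2 y3"
  shows "\<exists>c. y2 = scaleC c y1"
proof (rule ccontr)
  assume not_collinear: "\<nexists>c. y2 = scaleC c y1"
  have "cinner (scaleC (cinner y3 y1) y2) v = cinner (scaleC (cinner y3 y2) y1) v" for v
    using norming_diag[OF norming_rotate[OF norming_rotate[OF norming]], of v]
      norming_diag[OF norming_swap_left[OF norming_rotate[OF norming]], of v]
    by (simp add: cinner_scaleC_left)
  then have collinear: "scaleC (cinner y3 y1) y2 = scaleC (cinner y3 y2) y1"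
    by (rule cinner_ext)
  have "cinner y3 y1 = 0"
  proof (rule ccontr)
    assume "cinner y3 y1 \<noteq> 0"
    then have "y2 = scaleC (cinner y3 y2 / cinner y3 y1) y1"
      using arg_cong[OF collinear, of "scaleC (1 / cinner y3 y1)"] by (simp add: scaleC_scaleC)
    with not_collinear show False
      by blast
  qed
  then have "cinner y1 y3 = 0"
    using cinner_conj_commute[of y1 y3] by simp
  with norming_not_orthogonal[OF norming_swap_right[OF norming]] show False
    by simp
qed

end

section \<open>Symmetric k-linear forms of norm one\<close>

definition unit_sym_form ::
  "('f::real_normed_field \<Rightarrow> 'a::real_normed_vector \<Rightarrow> 'a) \<Rightarrow> nat \<Rightarrow> ((nat \<Rightarrow> 'a) \<Rightarrow> 'f) \<Rightarrow> bool"
  where "unit_sym_form sc k T \<longleftrightarrow>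
    multilinear_form sc k T \<and> symmetric_form k T \<and> bounded_form k T \<and> form_norm k T = 1"

lemma pi_s_unit_sym_form: "pi_s sc k x = Sup {norm (T x) | T. unit_sym_form sc k T}"
  by (simp add: pi_s_def unit_sym_form_def)

lemma unit_sym_form_norm_le:
  assumes "unit_sym_form sc k T" "\<forall>i<k. norm (w i) \<le> 1"
  shows "norm (T w) \<le> 1"
proof -
  have "norm (T w) \<le> form_norm k T"
    unfolding form_norm_def
    by (rule cSup_upper) (use assms in \<open>auto simp: unit_sym_form_def bounded_form_def\<close>)
  then show ?thesis
    using assms by (simp add: unit_sym_form_def)
qed

lemma unit_sym_formI:
  assumes "multilinear_form sc k T" "symmetric_form k T"
    and bound: "\<And>w. \<forall>i<k. norm (w i) \<le> 1 \<Longrightarrow> norm (T w) \<le> 1"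
    and "\<forall>i<k. norm (v i) \<le> 1" "norm (T v) = 1"
  shows "unit_sym_form sc k T"
proof -
  have "bounded_form k T"
    unfolding bounded_form_def bdd_above_def using bound by blast
  moreover have "form_norm k T = 1"
    unfolding form_norm_def by (rule cSup_eq_maximum) (use assms in auto)
  ultimately show ?thesis
    using assms by (simp add: unit_sym_form_def)
qed

lemma pi_s_eq_1I:
  assumes "unit_sym_form sc k T" "\<forall>i<k. norm (x i) = 1" "norm (T x) = 1"
  shows "pi_s sc k x = 1"
  unfolding pi_s_unit_sym_form
proof (rule cSup_eq_maximum)
  show "1 \<in> {norm (T x) |T. unit_sym_form sc k T}"
    using assms by auto
qed (use assms unit_sym_form_norm_le in fastforce)

lemma multilinear_form_scale_all:
  fixes sc :: "'f::real_normed_field \<Rightarrow> 'a::real_normed_vector \<Rightarrow> 'a"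
  assumes ml: "multilinear_form sc k T" and sc: "\<And>r u. sc (of_real r) u = r *\<^sub>R u"
  shows "T (\<lambda>i. r i *\<^sub>R w i) = (\<Prod>i<k. of_real (r i)) * T w"
proof -
  have scale: "T (v(i := c *\<^sub>R u)) = of_real c * T (v(i := u))" if "i < k" for v i c u
  proof -
    have "T (v(i := sc (of_real c) u + sc 0 u)) = of_real c * T (v(i := u)) + 0 * T (v(i := u))"
      using ml that unfolding multilinear_form_def by blast
    moreover have "sc 0 u = 0"
      using sc[of 0 u] by simp
    ultimately show ?thesis
      by (simp add: sc)
  qed
  define v where "v m = (\<lambda>i. if i < m then r i *\<^sub>R w i else w i)" for m
  have "T (v m) = (\<Prod>i<m. of_real (r i)) * T w" if "m \<le> k" for m
    using that
  proof (induction m)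
    case 0
    then show ?case
      by (simp add: v_def)
  next
    case (Suc m)
    have "v (Suc m) = (v m)(m := r m *\<^sub>R w m)" "(v m)(m := w m) = v m"
      by (auto simp: v_def)
    then have "T (v (Suc m)) = of_real (r m) * T (v m)"
      using scale[of m "v m" "r m" "w m"] Suc.prems by simp
    then show ?case
      using Suc by (simp add: mult_ac)
  qed
  moreover have "T (\<lambda>i. r i *\<^sub>R w i) = T (v k)"
    using ml by (auto simp: multilinear_form_def v_def)
  ultimately show ?thesis
    by simp
qed

lemma unit_sym_form_norm_le_prod:
  assumes T: "unit_sym_form sc k T" and sc: "\<And>r u. sc (of_real r) u = r *\<^sub>R u"
  shows "norm (T w) \<le> (\<Prod>i<k. norm (w i))"
proof -
  define w' where "w' i = (1 / norm (w i)) *\<^sub>R w i" for i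
  \<comment> \<open>w' i = 0 if w i = 0, because 1 / 0 = 0; so the next equation holds for all i.\<close>
  have "w = (\<lambda>i. norm (w i) *\<^sub>R w' i)"
    by (auto simp: w'_def fun_eq_iff)
  moreover have "multilinear_form sc k T"
    using T by (simp add: unit_sym_form_def)
  ultimately have "T w = (\<Prod>i<k. of_real (norm (w i))) * T w'"
    using multilinear_form_scale_all[OF _ sc] by metis
  then have "norm (T w) = (\<Prod>i<k. norm (w i)) * norm (T w')"
    by (simp add: norm_mult flip: prod_norm)
  also have "\<dots> \<le> (\<Prod>i<k. norm (w i)) * 1"
    using unit_sym_form_norm_le[OF T, of w'] by (intro mult_left_mono) (auto simp: w'_def prod_nonneg)
  finally show ?thesis
    by simp
qed

lemma compact_contractive_sym_forms:
  fixes sc :: "'f::{real_normed_field,heine_borel} \<Rightarrow> 'a::real_normed_vector \<Rightarrow> 'a"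
  shows "compact {T. multilinear_form sc k T \<and> symmetric_form k T \<and>
                     (\<forall>w. norm (T w) \<le> (\<Prod>i<k. norm (w i)))}"
    (is "compact ?K")
proof -
  have continuous_eval: "continuous_on A (\<lambda>T :: (nat \<Rightarrow> 'a) \<Rightarrow> 'f. T w)" for A w
    by (rule continuous_on_subset[OF continuous_on_product_coordinates]) simp
  have "compactin (product_topology (\<lambda>_. euclidean) UNIV)
      (PiE UNIV (\<lambda>w. cball (0 :: 'f) (\<Prod>i<k. norm (w i))))"
    by (simp add: compactin_PiE)
  then have "compact (PiE UNIV (\<lambda>w. cball (0 :: 'f) (\<Prod>i<k. norm (w i))))"
    by (simp add: euclidean_product_topology)
  moreover have "closed ?K"
    unfolding multilinear_form_def symmetric_form_def
    by (intro closed_Collect_conj closed_Collect_all closed_Collect_imp closed_Collect_eq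
        closed_Collect_le open_Collect_const continuous_intros continuous_eval)
  ultimately have "compact (PiE UNIV (\<lambda>w. cball (0 :: 'f) (\<Prod>i<k. norm (w i))) \<inter> ?K)"
    by (rule compact_Int_closed)
  moreover have "?K \<subseteq> PiE UNIV (\<lambda>w. cball (0 :: 'f) (\<Prod>i<k. norm (w i)))"
    by auto
  ultimately show ?thesis
    by (simp add: Int_absorb1)
qed

lemma pi_s_eq_1_norming_form:
  fixes sc :: "'f::{real_normed_field,heine_borel} \<Rightarrow> 'a::real_normed_vector \<Rightarrow> 'a"
  assumes sc: "\<And>r u. sc (of_real r) u = r *\<^sub>R u"
    and "unit_sym_form sc k T0" and "pi_s sc k x = 1" and x: "\<forall>i<k. norm (x i) = 1"
  obtains T where "multilinear_form sc k T" "symmetric_form k T"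
    "\<forall>w. norm (T w) \<le> (\<Prod>i<k. norm (w i))" "T x = 1"
(* T0 only ensures that the supremum defining pi_s is taken over a nonempty set. *)
proof -
  define K where "K = {T. multilinear_form sc k T \<and> symmetric_form k T \<and>
                          (\<forall>w. norm (T w) \<le> (\<Prod>i<k. norm (w i)))}"
  have unit_in_K: "T \<in> K" if "unit_sym_form sc k T" for T
    using that unit_sym_form_norm_le_prod[OF that sc] by (auto simp: K_def unit_sym_form_def)
  have "continuous_on K (\<lambda>T. norm (T x))"
    by (intro continuous_intros continuous_on_subset[OF continuous_on_product_coordinates]) simp
  then obtain Tm where "Tm \<in> K" and max: "\<And>T. T \<in> K \<Longrightarrow> norm (T x) \<le> norm (Tm x)"
    using continuous_attains_sup[of K "\<lambda>T. norm (T x)"] compact_contractive_sym_forms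
      unit_in_K[OF \<open>unit_sym_form sc k T0\<close>] unfolding K_def by blast
  have "Sup {norm (T x) | T. unit_sym_form sc k T} \<le> norm (Tm x)"
    by (rule cSup_least) (use \<open>unit_sym_form sc k T0\<close> max unit_in_K in auto)
  then have "1 \<le> norm (Tm x)"
    using \<open>pi_s sc k x = 1\<close> by (simp add: pi_s_unit_sym_form)
  moreover have "norm (Tm x) \<le> (\<Prod>i<k. norm (x i))"
    using \<open>Tm \<in> K\<close> by (simp add: K_def)
  then have "norm (Tm x) \<le> 1"
    using x by simp
  ultimately have "norm (Tm x) = 1"
    by simp
  define T where "T w = inverse (Tm x) * Tm w" for w
  have "multilinear_form sc k T" "symmetric_form k T"
    using \<open>Tm \<in> K\<close> unfolding K_def multilinear_form_def symmetric_form_def T_def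
    by (simp_all add: algebra_simps)
  moreover have "\<forall>w. norm (T w) \<le> (\<Prod>i<k. norm (w i))"
    using \<open>Tm \<in> K\<close> \<open>norm (Tm x) = 1\<close> by (simp add: K_def T_def norm_mult norm_inverse)
  moreover have "Tm x \<noteq> 0"
    using \<open>norm (Tm x) = 1\<close> by auto
  then have "T x = 1"
    by (simp add: T_def)
  ultimately show ?thesis
    using that by blast
qed

lemma sym_trilinear_slice:
  fixes sc :: "'f::real_normed_field \<Rightarrow> 'a::real_normed_vector \<Rightarrow> 'a"
  assumes ml: "multilinear_form sc k T" and sym: "symmetric_form k T"
    and bound: "\<forall>w. norm (T w) \<le> (\<Prod>i<k. norm (w i))"
    and sc: "\<And>r u. sc (of_real r) u = r *\<^sub>R u"
    and x: "\<forall>m<k. norm (x m) = 1"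
    and ijl: "i < k" "j < k" "l < k" "i \<noteq> j" "i \<noteq> l" "j \<noteq> l"
  shows "sym_trilinear sc (\<lambda>a b c. T (x(i := a, j := b, l := c)))"
proof
  have lin: "T ((x(i := a, j := b))(l := sc \<alpha> u + sc \<beta> v)) =
      \<alpha> * T ((x(i := a, j := b))(l := u)) + \<beta> * T ((x(i := a, j := b))(l := v))" for a b \<alpha> \<beta> u v
    using ml ijl unfolding multilinear_form_def by blast
  have "sc 1 u = u" "sc 0 u = 0" for u :: 'a
    using sc[of 1 u] sc[of 0 u] by simp_all
  then show "T (x(i := a, j := b, l := u + v)) =
      T (x(i := a, j := b, l := u)) + T (x(i := a, j := b, l := v))"
    and "T (x(i := a, j := b, l := sc r u)) = r * T (x(i := a, j := b, l := u))" for a b u v r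
    using lin[of a b 1 u 1 v] lin[of a b r u 0 u] by simp_all
  have swap: "T (w \<circ> Transposition.transpose p q) = T w" if "p < k" "q < k" for w p q
    using sym that unfolding symmetric_form_def by (simp add: permutes_swap_id)
  show "T (x(i := a, j := b, l := c)) = T (x(i := b, j := a, l := c))" for a b c
  proof -
    have "x(i := b, j := a, l := c) \<circ> Transposition.transpose i j = x(i := a, j := b, l := c)"
      using ijl by (auto simp: fun_eq_iff Transposition.transpose_def)
    then show ?thesis
      using swap[OF ijl(1,2)] by metis
  qed
  show "T (x(i := a, j := b, l := c)) = T (x(i := a, j := c, l := b))" for a b c
  proof -
    have "x(i := a, j := c, l := b) \<circ> Transposition.transpose j l = x(i := a, j := b, l := c)"
      using ijl by (auto simp: fun_eq_iff Transposition.transpose_def)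
    then show ?thesis
      using swap[OF ijl(2,3)] by metis
  qed
  show "norm (T (x(i := a, j := b, l := c))) \<le> norm a * norm b * norm c" for a b c
  proof -
    have "(\<Prod>m<k. norm ((x(i := a, j := b, l := c)) m)) =
        (\<Prod>m\<in>{i, j, l}. norm ((x(i := a, j := b, l := c)) m))"
      using x ijl by (intro prod.mono_neutral_right) auto
    also have "\<dots> = norm a * norm b * norm c"
      using ijl by simp
    finally show ?thesis
      using bound by metis
  qed
qed

lemma pi_s_eq_1_norming_triple:
  fixes sc :: "'f::{real_normed_field,heine_borel} \<Rightarrow> 'a::real_normed_vector \<Rightarrow> 'a"
  assumes sc: "\<And>r u. sc (of_real r) u = r *\<^sub>R u"
    and "unit_sym_form sc k T0" and "pi_s sc k x = 1" and x: "\<forall>m<k. norm (x m) = 1"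
    and ijl: "i < k" "j < k" "l < k" "i \<noteq> j" "i \<noteq> l" "j \<noteq> l"
  obtains S where "sym_trilinear sc S" "norming_triple S (x i) (x j) (x l)"
proof -
  obtain T where T: "multilinear_form sc k T" "symmetric_form k T"
    "\<forall>w. norm (T w) \<le> (\<Prod>i<k. norm (w i))" "T x = 1"
    by (rule pi_s_eq_1_norming_form[OF sc assms(2-4)])
  show ?thesis
  proof (rule that)
    show "sym_trilinear sc (\<lambda>a b c. T (x(i := a, j := b, l := c)))"
      by (rule sym_trilinear_slice[OF T(1-3) sc x ijl])
    show "norming_triple (\<lambda>a b c. T (x(i := a, j := b, l := c))) (x i) (x j) (x l)"
      using T(4) x ijl by (simp add: norming_triple_def)
  qed
qed

section \<open>Product forms\<close>

lemma prod_fun_upd: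
  fixes k :: nat
  assumes "i < k"
  shows "(\<Prod>m<k. g ((w(i := z)) m)) = g z * (\<Prod>m\<in>{..<k} - {i}. g (w m))"
proof -
  have "(\<Prod>m<k. g ((w(i := z)) m)) = g z * (\<Prod>m\<in>{..<k} - {i}. g ((w(i := z)) m))"
    using assms by (subst prod.remove[of "{..<k}" i]) auto
  also have "(\<Prod>m\<in>{..<k} - {i}. g ((w(i := z)) m)) = (\<Prod>m\<in>{..<k} - {i}. g (w m))"
    by (rule prod.cong) auto
  finally show ?thesis .
qed

lemma symmetric_form_prod: "symmetric_form k (\<lambda>w. c (\<Prod>m<k. g (w m)))"
  unfolding symmetric_form_def
proof (intro allI impI)
  fix p and w :: "nat \<Rightarrow> 'a"
  assume "p permutes {..<k}"
  then have "(\<Prod>m<k. g ((w \<circ> p) m)) = (\<Prod>m<k. g (w m))"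
    using prod.permute[of p "{..<k}" "\<lambda>m. g (w m)"] by (simp add: comp_def)
  then show "c (\<Prod>m<k. g ((w \<circ> p) m)) = c (\<Prod>m<k. g (w m))"
    by simp
qed

lemma unit_sym_form_cinner_prod:
  fixes b :: "'a::complex_hilbert"
  assumes "norm b = 1"
  shows "unit_sym_form scaleC k (\<lambda>w. \<Prod>m<k. cinner b (w m))"
proof (rule unit_sym_formI)
  show "multilinear_form scaleC k (\<lambda>w. \<Prod>m<k. cinner b (w m))"
    unfolding multilinear_form_def
  proof (intro conjI allI impI)
    show "(\<Prod>m<k. cinner b (w m)) = (\<Prod>m<k. cinner b (w' m))" if "\<forall>i<k. w i = w' i" for w w'
      using that by (intro prod.cong) auto
    show "(\<Prod>m<k. cinner b ((w(i := scaleC a u + scaleC c v)) m)) =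
        a * (\<Prod>m<k. cinner b ((w(i := u)) m)) + c * (\<Prod>m<k. cinner b ((w(i := v)) m))"
      if "i < k" for i w u v a c
      unfolding prod_fun_upd[OF that] by (simp add: cinner_add_right cinner_scaleC_right algebra_simps)
  qed
  show "symmetric_form k (\<lambda>w. \<Prod>m<k. cinner b (w m))"
    using symmetric_form_prod[of k id] by simp
  show "norm (\<Prod>m<k. cinner b (w m)) \<le> 1" if "\<forall>i<k. norm (w i) \<le> 1" for w
    using that cmod_cinner_le_norm[OF assms] unfolding prod_norm[symmetric]
    by (intro prod_le_1) (auto intro: order_trans)
  show "\<forall>i<k. norm ((\<lambda>_. b) i) \<le> 1" "norm (\<Prod>m<k. cinner b ((\<lambda>_. b) m)) = 1"
    using assms by (simp_all add: cinner_self_eq_1)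
qed

definition complex_coord :: "'a::real_inner \<Rightarrow> 'a \<Rightarrow> 'a \<Rightarrow> complex" where
  "complex_coord e1 e2 w = Complex (inner e1 w) (inner e2 w)"

lemma complex_coord_add_scale:
  "complex_coord e1 e2 (a *\<^sub>R u + b *\<^sub>R v) =
    complex_of_real a * complex_coord e1 e2 u + complex_of_real b * complex_coord e1 e2 v"
  by (simp add: complex_coord_def complex_eq_iff inner_add_right)

lemma norm_complex_coord_le:
  fixes e1 e2 w :: "'a::real_inner"
  assumes "norm e1 = 1" "inner e1 e2 = 0" "e2 = 0 \<or> norm e2 = 1"
  shows "cmod (complex_coord e1 e2 w) \<le> norm w"
proof -
  define a b where "a = inner e1 w" and "b = inner e2 w"
  have ab: "inner e1 w = a" "inner w e1 = a" "inner e2 w = b" "inner w e2 = b"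
    by (simp_all add: a_def b_def inner_commute)
  have "b * inner e2 e2 = b"
    using assms(3) by (auto simp: b_def norm_eq_1)
  then have "inner (w - a *\<^sub>R e1 - b *\<^sub>R e2) (w - a *\<^sub>R e1 - b *\<^sub>R e2) = inner w w - a\<^sup>2 - b\<^sup>2"
    using assms(1,2) by (simp add: ab inner_diff inner_commute[of e2 e1] norm_eq_1 power2_eq_square
        algebra_simps)
  then have "a\<^sup>2 + b\<^sup>2 \<le> (norm w)\<^sup>2"
    by (metis diff_ge_0_iff_ge diff_diff_eq inner_ge_zero power2_norm_eq_inner)
  then have "sqrt (a\<^sup>2 + b\<^sup>2) \<le> norm w"
    using real_sqrt_le_mono by fastforce
  then show ?thesis
    by (simp add: complex_coord_def cmod_def a_def b_def)
qed

lemma norm_complex_coord_eq: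
  fixes e1 e2 :: "'a::real_inner"
  assumes "norm e1 = 1" "inner e1 e2 = 0" "e2 = 0 \<or> norm e2 = 1"
  shows "cmod (complex_coord e1 e2 (s *\<^sub>R e1 + t *\<^sub>R e2)) = norm (s *\<^sub>R e1 + t *\<^sub>R e2)"
proof -
  define \<epsilon> where "\<epsilon> = inner e2 e2"
  have "\<epsilon> * \<epsilon> = \<epsilon>"
    using assms(3) by (auto simp: \<epsilon>_def norm_eq_1)
  have "(cmod (complex_coord e1 e2 (s *\<^sub>R e1 + t *\<^sub>R e2)))\<^sup>2 = s\<^sup>2 + t\<^sup>2 * (\<epsilon> * \<epsilon>)"
    using assms(1,2) by (simp add: complex_coord_def cmod_power2 inner_add_right inner_commute
        norm_eq_1 \<epsilon>_def power_mult_distrib) (simp add: power2_eq_square)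
  also have "\<dots> = (norm (s *\<^sub>R e1 + t *\<^sub>R e2))\<^sup>2"
    using assms(1,2) \<open>\<epsilon> * \<epsilon> = \<epsilon>\<close>
    by (simp add: power2_norm_eq_inner inner_add inner_commute[of e2 e1] norm_eq_1 flip: \<epsilon>_def)
      (auto simp: power2_eq_square algebra_simps)
  finally show ?thesis
    by (simp add: power2_eq_iff_nonneg)
qed

lemma unit_sym_form_complex_coord_prod:
  fixes e1 e2 :: "'a::real_inner"
  assumes e: "norm e1 = 1" "inner e1 e2 = 0" "e2 = 0 \<or> norm e2 = 1" and "cmod c \<le> 1"
    and witness: "\<forall>i<k. norm (v i) \<le> 1" "\<bar>Re (c * (\<Prod>m<k. complex_coord e1 e2 (v m)))\<bar> = 1"
  shows "unit_sym_form scaleR k (\<lambda>w. Re (c * (\<Prod>m<k. complex_coord e1 e2 (w m))))"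
proof (rule unit_sym_formI)
  show "multilinear_form scaleR k (\<lambda>w. Re (c * (\<Prod>m<k. complex_coord e1 e2 (w m))))"
    unfolding multilinear_form_def
  proof (intro conjI allI impI)
    show "Re (c * (\<Prod>m<k. complex_coord e1 e2 (w m))) = Re (c * (\<Prod>m<k. complex_coord e1 e2 (w' m)))"
      if "\<forall>i<k. w i = w' i" for w w'
      using that by (metis (no_types, lifting) lessThan_iff prod.cong)
    show "Re (c * (\<Prod>m<k. complex_coord e1 e2 ((w(i := a *\<^sub>R u + b *\<^sub>R v)) m))) =
        a * Re (c * (\<Prod>m<k. complex_coord e1 e2 ((w(i := u)) m))) +
        b * Re (c * (\<Prod>m<k. complex_coord e1 e2 ((w(i := v)) m)))"
      if "i < k" for i w u v and a b :: real
      unfolding prod_fun_upd[OF that] complex_coord_add_scale by (simp add: algebra_simps)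
  qed
  show "symmetric_form k (\<lambda>w. Re (c * (\<Prod>m<k. complex_coord e1 e2 (w m))))"
    by (rule symmetric_form_prod)
  show "norm (Re (c * (\<Prod>m<k. complex_coord e1 e2 (w m)))) \<le> 1" if "\<forall>i<k. norm (w i) \<le> 1" for w
  proof -
    have "(\<Prod>m<k. cmod (complex_coord e1 e2 (w m))) \<le> 1"
      using that norm_complex_coord_le[OF e] by (intro prod_le_1) (auto intro: order_trans)
    then have "cmod c * (\<Prod>m<k. cmod (complex_coord e1 e2 (w m))) \<le> 1"
      using \<open>cmod c \<le> 1\<close> by (simp add: mult_le_one prod_nonneg)
    then show ?thesis
      using abs_Re_le_cmod[of "c * (\<Prod>m<k. complex_coord e1 e2 (w m))"]
      by (simp add: norm_mult prod_norm)
  qed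
qed (use witness in simp_all)

lemma (in vector_space) dim_pos:
  assumes "finite S" "x \<in> S" "x \<noteq> 0"
  shows "0 < dim S"
proof (rule ccontr)
  assume "\<not> 0 < dim S"
  obtain B where "B \<subseteq> S" "S \<subseteq> span B" "card B = dim S"
    by (rule basis_exists)
  with \<open>\<not> 0 < dim S\<close> \<open>finite S\<close> have "S \<subseteq> span {}"
    by (metis bot_nat_0.not_eq_extremum card_0_eq finite_subset)
  with assms show False
    by auto
qed

lemma (in vector_space) obtain_independent_subset:
  assumes "n \<le> dim S"
  obtains C where "C \<subseteq> S" "independent C" "card C = n"
proof -
  obtain B where "B \<subseteq> S" "independent B" "card B = dim S"
    by (metis basis_exists)
  moreover obtain C where "C \<subseteq> B" "card C = n"
    using obtain_subset_with_card_n assms calculation(3) by metis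
  ultimately show ?thesis
    using that independent_mono by blast
qed

lemma orthonormalize_pair:
  fixes a b :: "'a::real_inner"
  assumes "norm a = 1"
  obtains e where "inner a e = 0" "e = 0 \<or> norm e = 1" "b \<in> span {a, e}"
proof -
  define v where "v = b - inner a b *\<^sub>R a"
  define e where "e = (1 / norm v) *\<^sub>R v"
  \<comment> \<open>e = 0 if b is a multiple of a, because 1 / 0 = 0.\<close>
  have "inner a e = 0"
    using assms by (simp add: e_def v_def inner_diff_right norm_eq_1)
  moreover have "e = 0 \<or> norm e = 1"
    by (auto simp: e_def)
  moreover have "b = inner a b *\<^sub>R a + norm v *\<^sub>R e"
    by (cases "v = 0") (auto simp: e_def v_def)
  then have "b \<in> span {a, e}"
    by (metis insertCI span_add span_base span_mul)
  ultimately show ?thesis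
    using that by blast
qed

lemma span_pair_coords:
  fixes a e :: "'a::real_vector"
  assumes "x \<in> span {a, e}"
  obtains s t where "x = s *\<^sub>R a + t *\<^sub>R e"
proof -
  obtain s where "x - s *\<^sub>R a \<in> span {e}"
    using assms by (auto simp: span_insert)
  then obtain t where "x - s *\<^sub>R a = t *\<^sub>R e"
    by (auto simp: span_singleton)
  then show ?thesis
    using that[of s t] by (simp add: algebra_simps)
qed

lemma obtain_orthonormal_plane:
  fixes X :: "'a::real_inner set"
  assumes units: "\<forall>v\<in>X. norm v = 1" and "dim X \<in> {1, 2}"
  obtains a e where "norm a = 1" "inner a e = 0" "e = 0 \<or> norm e = 1" "X \<subseteq> span {a, e}"
proof -
  obtain B where B: "B \<subseteq> X" "X \<subseteq> span B" "card B = dim X"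
    by (rule basis_exists)
  then have "card B = 1 \<or> card B = 2"
    using assms(2) by simp
  then obtain a b where "a \<in> B" "B \<subseteq> {a, b}"
    by (auto simp: card_1_singleton_iff card_2_iff)
  then have "norm a = 1" "X \<subseteq> span {a, b}"
    using B units span_mono[of B "{a, b}"] by auto
  obtain e where e: "inner a e = 0" "e = 0 \<or> norm e = 1" "b \<in> span {a, e}"
    using orthonormalize_pair[OF \<open>norm a = 1\<close>] by blast
  then have "span {a, b} \<subseteq> span {a, e}"
    by (simp add: span_minimal span_base span_superset)
  with \<open>norm a = 1\<close> e(1,2) \<open>X \<subseteq> span {a, b}\<close> show ?thesis
    using that by blast
qed

section \<open>Characterization of pi_s(x) = 1\<close>

lemma pi_s_real_eq_1_imp_dim_le_2:
  fixes x :: "nat \<Rightarrow> 'a::real_inner"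
  assumes "0 < k" and x: "\<forall>i<k. norm (x i) = 1" and pi: "pi_s scaleR k x = 1"
  shows "dim (span (x ` {..<k})) \<le> 2"
proof (rule ccontr)
  assume "\<not> dim (span (x ` {..<k})) \<le> 2"
  then have "3 \<le> dim (x ` {..<k})"
    by simp
  then obtain C where "C \<subseteq> x ` {..<k}" "independent C" "card C = 3"
    by (rule real_vector.obtain_independent_subset)
  then obtain a b c where abc: "{a, b, c} \<subseteq> x ` {..<k}" "independent {a, b, c}"
    "a \<noteq> b" "a \<noteq> c" "b \<noteq> c"
    by (auto simp: card_3_iff)
  then obtain i j l where ijl: "a = x i" "b = x j" "c = x l" "i < k" "j < k" "l < k"
    by auto
  have "i \<noteq> j" "i \<noteq> l" "j \<noteq> l"
    using abc(3-5) ijl(1-3) by auto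
  have "complex_coord (x 0) 0 (x 0) = 1"
    using x \<open>0 < k\<close> by (simp add: complex_coord_def complex_eq_iff norm_eq_1)
  then have "unit_sym_form scaleR k (\<lambda>w. Re (1 * (\<Prod>m<k. complex_coord (x 0) 0 (w m))))"
    using x \<open>0 < k\<close> by (intro unit_sym_form_complex_coord_prod[where v = "\<lambda>_. x 0"]) auto
  from pi_s_eq_1_norming_triple[where sc = scaleR, OF _ this pi x ijl(4-6)
      \<open>i \<noteq> j\<close> \<open>i \<noteq> l\<close> \<open>j \<noteq> l\<close>]
  obtain S where "real_sym_trilinear S" "norming_triple S a b c"
    unfolding real_sym_trilinear_def ijl(1-3) by auto
  moreover have "independent {c, b}"
    by (rule independent_mono[OF abc(2)]) auto
  then have "c \<notin> span {b}"
    using abc(5) by (simp add: independent_insert)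
  then have "c \<noteq> - b"
    using span_neg[OF span_base[of b "{b}"]] by auto
  ultimately have "a \<in> span {b, c}"
    using abc(5) real_sym_trilinear.norming_span by blast
  then show False
    using abc(2-4) by (simp add: independent_insert)
qed

lemma pi_s_real_eq_1_if_dim_le_2:
  fixes x :: "nat \<Rightarrow> 'a::real_inner"
  assumes x: "\<forall>i<k. norm (x i) = 1" and dim: "dim (span (x ` {..<k})) \<in> {1, 2}"
  shows "pi_s scaleR k x = 1"
proof -
  obtain a e where ae: "norm a = 1" "inner a e = 0" "e = 0 \<or> norm e = 1"
    and plane: "x ` {..<k} \<subseteq> span {a, e}"
    by (rule obtain_orthonormal_plane[of "x ` {..<k}"]) (use x dim in auto)
  define P where "P = (\<Prod>m<k. complex_coord a e (x m))"
  have "cmod (complex_coord a e (x m)) = 1" if "m < k" for m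
  proof -
    have "x m \<in> span {a, e}"
      using that plane by auto
    then obtain s t where "x m = s *\<^sub>R a + t *\<^sub>R e"
      by (rule span_pair_coords)
    moreover have "norm (x m) = 1"
      using x that by simp
    ultimately show ?thesis
      using norm_complex_coord_eq[OF ae] by simp
  qed
  then have "cmod P = 1"
    by (simp add: P_def flip: prod_norm)
  then have "Re (cnj P * P) = 1"
    by (simp add: mult.commute[of "cnj P"] flip: complex_norm_square)
  then have witness: "\<bar>Re (cnj P * (\<Prod>m<k. complex_coord a e (x m)))\<bar> = 1"
    by (simp flip: P_def)
  then have "unit_sym_form scaleR k (\<lambda>w. Re (cnj P * (\<Prod>m<k. complex_coord a e (w m))))"
    using \<open>cmod P = 1\<close> x by (intro unit_sym_form_complex_coord_prod[OF ae, where v = x]) auto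
  then show ?thesis
    using x witness by (intro pi_s_eq_1I) auto
qed

lemma pi_s_complex_eq_1_imp_dim_le_1:
  fixes y :: "nat \<Rightarrow> 'a::complex_hilbert"
  assumes "3 \<le> k" and y: "\<forall>i<k. norm (y i) = 1" and pi: "pi_s scaleC k y = 1"
  shows "cvs.dim (cvs.span (y ` {..<k})) \<le> 1"
proof (rule ccontr)
  assume "\<not> cvs.dim (cvs.span (y ` {..<k})) \<le> 1"
  then have "2 \<le> cvs.dim (y ` {..<k})"
    by simp
  then obtain C where "C \<subseteq> y ` {..<k}" "cvs.independent C" "card C = 2"
    by (rule cvs.obtain_independent_subset)
  then obtain a b where ab: "{a, b} \<subseteq> y ` {..<k}" "cvs.independent {b, a}" "a \<noteq> b"
    by (auto simp: card_2_iff insert_commute)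
  then obtain i j where ij: "a = y i" "b = y j" "i < k" "j < k"
    by auto
  have "i \<noteq> j"
    using ab(3) ij(1,2) by auto
  have "{0, 1, 2} - {i, j} \<noteq> {}"
    by auto
  then obtain l where "l < k" "l \<noteq> i" "l \<noteq> j"
    using \<open>3 \<le> k\<close> by fastforce
  have "unit_sym_form scaleC k (\<lambda>w. \<Prod>m<k. cinner (y 0) (w m))"
    using y \<open>3 \<le> k\<close> by (intro unit_sym_form_cinner_prod) auto
  from pi_s_eq_1_norming_triple[OF scaleC_of_real this pi y ij(3,4) \<open>l < k\<close> \<open>i \<noteq> j\<close>]
  obtain S where "complex_sym_trilinear S" "norming_triple S a b (y l)"
    unfolding complex_sym_trilinear_def ij(1,2) using \<open>l \<noteq> i\<close> \<open>l \<noteq> j\<close> by auto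
  then obtain c where "b = scaleC c a"
    using complex_sym_trilinear.norming_collinear by blast
  then have "b \<in> cvs.span {a}"
    by (simp add: cvs.span_base cvs.span_scale)
  then show False
    using ab(2,3) by (simp add: cvs.independent_insert)
qed

lemma pi_s_complex_eq_1_if_dim_1:
  fixes y :: "nat \<Rightarrow> 'a::complex_hilbert"
  assumes y: "\<forall>i<k. norm (y i) = 1" and dim: "cvs.dim (cvs.span (y ` {..<k})) = 1"
  shows "pi_s scaleC k y = 1"
proof -
  obtain B where B: "B \<subseteq> y ` {..<k}" "y ` {..<k} \<subseteq> cvs.span B" "card B = cvs.dim (y ` {..<k})"
    by (rule cvs.basis_exists)
  with dim obtain b where "B = {b}"
    by (auto simp: card_1_singleton_iff)
  with B y have "norm b = 1"
    by auto
  have "cmod (cinner b (y m)) = 1" if "m < k" for m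
  proof -
    have "y m \<in> cvs.span {b}"
      using that B(2) \<open>B = {b}\<close> by auto
    then obtain c where c: "y m = scaleC c b"
      by (auto simp: cvs.span_singleton)
    moreover have "norm (y m) = 1"
      using y that by simp
    ultimately have "cmod c = 1"
      using \<open>norm b = 1\<close> by (simp add: norm_scaleC)
    with \<open>norm b = 1\<close> show ?thesis
      by (simp add: c cinner_scaleC_right cinner_self_eq_1)
  qed
  then have "norm (\<Prod>m<k. cinner b (y m)) = 1"
    by (simp flip: prod_norm)
  then show ?thesis
    using unit_sym_form_cinner_prod[OF \<open>norm b = 1\<close>] y by (intro pi_s_eq_1I) auto
qed

lemma pi_s_real_eq_1_iff:
  fixes x :: "nat \<Rightarrow> 'a::real_inner"
  assumes "0 < k" and x: "\<forall>i<k. norm (x i) = 1"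
  shows "pi_s scaleR k x = 1 \<longleftrightarrow> dim (span (x ` {..<k})) \<in> {1, 2}"
proof -
  have "0 < dim (x ` {..<k})"
    using assms by (intro real_vector.dim_pos[of _ "x 0"]) auto
  then show ?thesis
    using pi_s_real_eq_1_imp_dim_le_2[OF assms] pi_s_real_eq_1_if_dim_le_2[OF x] by force
qed

lemma pi_s_complex_eq_1_iff:
  fixes y :: "nat \<Rightarrow> 'a::complex_hilbert"
  assumes "3 \<le> k" and y: "\<forall>i<k. norm (y i) = 1"
  shows "pi_s scaleC k y = 1 \<longleftrightarrow> cvs.dim (cvs.span (y ` {..<k})) = 1"
proof -
  have "0 < k"
    using assms(1) by simp
  then have "0 < cvs.dim (y ` {..<k})"
    using y by (intro cvs.dim_pos[of _ "y 0"]) auto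
  then show ?thesis
    using pi_s_complex_eq_1_imp_dim_le_1[OF assms] pi_s_complex_eq_1_if_dim_1[OF y] by force
qed

theorem proposition1p3:
  fixes k :: nat
  assumes "k \<ge> 3"
  shows "(\<forall>x :: nat \<Rightarrow> 'a::{real_inner, complete_space}.
            (\<forall>i<k. norm (x i) = 1) \<longrightarrow>
            (pi_s scaleR k x = 1 \<longleftrightarrow> dim (span (x ` {..<k})) \<in> {1, 2}))
       \<and> (\<forall>y :: nat \<Rightarrow> 'b::complex_hilbert.
            (\<forall>i<k. norm (y i) = 1) \<longrightarrow>
            (pi_s scaleC k y = 1 \<longleftrightarrow>
               vector_space.dim scaleC (module.span scaleC (y ` {..<k})) = 1))"
proof -
  have "0 < k"
    using assms by simp
  then show ?thesis
    using pi_s_real_eq_1_iff pi_s_complex_eq_1_iff[OF assms] by blast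
qed

end
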